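(* Let $p,q$ be primes with $q>p\geq 5$. There are only finitely many triples $(\{x,y\},p,q)$ for which there exists a regular map $\mathcal{M}(G;r,t,\ell)$ of type $\{x,y\}$ with Euler characteristic $-pq$ such that $pq$ divides $|G|$.
   Context: A regular map is given algebraically as a quadruple $\mathcal{M}=\mathcal{M}(G;r,t,\ell)$ where $G$ is a finite group generated by three involutions $r,t,\ell$ with $t\ell=\ell t$. Its type is $\{|rt|,|r\ell|\}$, and its Euler characteristic is $\chi=-\frac{|G|(xy-2x-2y)}{4xy}$ where $x=|rt|$, $y=|r\ell|$. *)

theory Defs
  imports "HOL-Algebra.Generated_Groups" "HOL-Algebra.Multiplicative_Group" "HOL-Computational_Algebra.Primes" Complex_Main
begin

definition involution :: "('g, 'b) monoid_scheme \<Rightarrow> 'g \<Rightarrow> bool" where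
  "involution G a \<longleftrightarrow> a \<in> carrier G \<and> a \<noteq> \<one>\<^bsub>G\<^esub> \<and> a \<otimes>\<^bsub>G\<^esub> a = \<one>\<^bsub>G\<^esub>"

definition regular_map :: "('g, 'b) monoid_scheme \<Rightarrow> 'g \<Rightarrow> 'g \<Rightarrow> 'g \<Rightarrow> bool" where
  "regular_map G r t l \<longleftrightarrow> group G \<and> finite (carrier G) \<and>
     involution G r \<and> involution G t \<and> involution G l \<and>
     t \<otimes>\<^bsub>G\<^esub> l = l \<otimes>\<^bsub>G\<^esub> t \<and>
     generate G {r, t, l} = carrier G"

definition map_type :: "('g, 'b) monoid_scheme \<Rightarrow> 'g \<Rightarrow> 'g \<Rightarrow> 'g \<Rightarrow> nat set" where
  "map_type G r t l = {group.ord G (r \<otimes>\<^bsub>G\<^esub> t), group.ord G (r \<otimes>\<^bsub>G\<^esub> l)}"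

definition euler_char :: "('g, 'b) monoid_scheme \<Rightarrow> 'g \<Rightarrow> 'g \<Rightarrow> 'g \<Rightarrow> real" where
  "euler_char G r t l =
     (let x = real (group.ord G (r \<otimes>\<^bsub>G\<^esub> t)); y = real (group.ord G (r \<otimes>\<^bsub>G\<^esub> l))
      in - (real (order G) * (x * y - 2 * x - 2 * y)) / (4 * x * y))"

end

theory Submission
  imports Defs "HOL-Algebra.Sylow" "HOL-Algebra.Group_Action" "HOL-Algebra.SndIsomorphismGrp"
begin

(* Write |G| = pqm and x = |rt|, y = |rl|. The formula for the Euler characteristic turns into
   m (xy - 2x - 2y) = 4xy, and as in the proof of the Hurwitz bound this forces m <= 84 and
   x, y <= 3360. So it remains to bound q; suppose q > 14112 = 2 * 84^2.

   Sylow counting then makes the subgroup Q of order q normal: otherwise n_q = pd and n_p = qe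
   with d, e <= 84, and pd = 1 (mod q), qe = 1 (mod p) is impossible for q this large; if instead
   the subgroup of order p is normal, it centralizes Q and forces n_q to divide m.

   So Q = <g> is normal, each of r, t, l centralizes or inverts g, and no product of two of
   them has order divisible by q. The transfer of the centralizer C of g into its central
   subgroup Q shows that the elements of C of order prime to q form a normal subgroup K of G
   not containing g. Then K, or K extended by an involution s inverting g, is a proper subgroup
   containing r, t and l: a contradiction. *)

section \<open>Arithmetic\<close>

lemma not_prime_dvd_mult_of_less:
  fixes q a b :: nat
  assumes "prime q" "0 < a" "a < q" "0 < b" "b < q"
  shows "\<not> q dvd a * b"
  using assms prime_dvd_mult_iff[OF assms(1)] by (auto dest: dvd_imp_le)

lemma not_prime_square_dvd:
  fixes q k :: nat
  assumes "prime q" "\<not> q dvd k"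
  shows "\<not> q\<^sup>2 dvd q * k"
  using assms prime_gt_0_nat[OF assms(1)] by (simp add: power2_eq_square)

lemma not_prime_square_dvd_mult_of_less:
  fixes q p m :: nat
  assumes "prime q" "0 < p" "p < q" "0 < m" "m < q"
  shows "\<not> q\<^sup>2 dvd p * q * m"
proof -
  have "\<not> q\<^sup>2 dvd q * (p * m)"
    using not_prime_square_dvd[OF assms(1) not_prime_dvd_mult_of_less[OF assms]] .
  moreover have "q * (p * m) = p * q * m" by simp
  ultimately show ?thesis by simp
qed

lemma mod_eq_one_imp_less:
  fixes n q :: nat
  assumes "n mod q = 1" "n \<noteq> 1"
  shows "q < n"
proof -
  define k where "k = n div q"
  have n: "n = k * q + 1" using assms(1) div_mult_mod_eq[of n q] unfolding k_def by simp
  then have "k \<noteq> 0" using assms(2) by auto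
  then have "q \<le> k * q" by simp
  then show ?thesis using n by linarith
qed

lemma large_factor_of_prime_mult:
  fixes n c p m :: nat
  assumes "prime p" "n * c = p * m" "0 < m" "m < n"
  obtains d where "n = p * d" "d * c = m"
proof (cases "p dvd n")
  case True
  then obtain d where "n = p * d" by blast
  moreover have "d * c = m" using assms(1,2) calculation prime_gt_0_nat by simp
  ultimately show ?thesis using that by blast
next
  case False
  have "p dvd n * c" using assms(2) by simp
  then have "p dvd c" using prime_dvd_mult_iff[OF assms(1)] False by blast
  then obtain c' where "c = p * c'" by blast
  then have "n * c' = m" using assms(1,2) prime_gt_0_nat by simp
  then have "n \<le> m" using assms(3) by (auto intro: dvd_imp_le)
  then show ?thesis using assms(4) by simp
qed

lemma dvd_prime_mult_cases:
  fixes n r s m b :: nat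
  assumes "prime s" "n dvd s * m" "n mod r = 1" "0 < m" "m \<le> b" "b < r"
  obtains "n = 1" | d where "n = s * d" "0 < d" "d \<le> b"
proof (cases "n = 1")
  case False
  then have "m < n" using mod_eq_one_imp_less[OF assms(3)] assms(5,6) by fastforce
  obtain c where "s * m = n * c" using assms(2) ..
  then obtain d where d: "n = s * d" "d * c = m"
    using large_factor_of_prime_mult[OF assms(1) _ assms(4) \<open>m < n\<close>] by metis
  moreover have "0 < d" using d(2) assms(4) by auto
  moreover have "d \<le> b" using dvd_imp_le[OF dvdI[OF d(2)[symmetric]] assms(4)] assms(5) by simp
  ultimately show ?thesis using that(2) by blast
qed (use that(1) in blast)

lemma mutual_residues_bound:
  fixes p q d e b :: nat
  assumes "1 < p" "p < q" "0 < e" "d \<le> b" "e \<le> b"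
    and pd: "(p * d) mod q = 1" and qe: "(q * e) mod p = 1"
  shows "q < 2 * b * b"
proof -
  define k where "k = (p * d) div q"
  have k: "p * d = k * q + 1" using pd div_mult_mod_eq[of "p * d" q] unfolding k_def by simp
  define u where "u = (q * e) div p"
  have u: "q * e = u * p + 1" using qe div_mult_mod_eq[of "q * e" p] unfolding u_def by simp
  have "e * (p * d) = e * (k * q + 1)" using k by simp
  also have "\<dots> = k * (q * e) + e" by (simp add: algebra_simps)
  also have "\<dots> = (k * u) * p + (k + e)" using u by (simp add: algebra_simps)
  finally have "(k * u) * p + (k + e) = e * d * p" by (simp add: ac_simps)
  then have "p dvd (k * u) * p + (k + e)" by simp
  then have "p dvd k + e" by (simp add: dvd_add_right_iff)
  then have "p \<le> k + e" using \<open>0 < e\<close> by (simp add: dvd_imp_le)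
  have "k * q < p * d" using k by simp
  also have "\<dots> \<le> q * d" using \<open>p < q\<close> by simp
  finally have "k < d" by (simp add: mult.commute)
  have "k \<noteq> 0"
  proof
    assume "k = 0"
    then have "p * d = 1" using k by simp
    then show False using \<open>1 < p\<close> by simp
  qed
  then have "q \<le> k * q" by simp
  then have "q < p * d" unfolding k by linarith
  also have "\<dots> \<le> (2 * b) * b" using \<open>p \<le> k + e\<close> \<open>k < d\<close> assms(4,5) by (intro mult_mono) auto
  finally show ?thesis by simp
qed

text \<open>In terms of \<open>1/2 - 1/x - 1/y\<close>: if positive, it is at least \<open>1/42\<close>.\<close>

lemma hurwitz_gap:
  fixes x y :: int
  assumes "1 \<le> x" "1 \<le> y" "0 < x * y - 2 * x - 2 * y"
  shows "x * y \<le> 21 * (x * y - 2 * x - 2 * y)"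
proof (cases "x \<le> 4 \<or> y \<le> 4")
  case True
  then have "x \<in> {1, 2, 3, 4} \<or> y \<in> {1, 2, 3, 4}" using assms(1,2) by auto
  then show ?thesis using assms(3) by auto
next
  case False
  then have "5 * y \<le> x * y" "5 * x \<le> x * y"
    using assms(1,2) mult_right_mono[of 5 x y] mult_left_mono[of 5 y x] by simp_all
  moreover have "21 * (x * y - 2 * x - 2 * y) = 21 * (x * y) - 42 * x - 42 * y" by simp
  ultimately show ?thesis using False by linarith
qed

lemma hurwitz_equation_bound_ordered:
  fixes x y m :: int
  assumes "1 \<le> x" "x \<le> y" "5 \<le> m" "m \<le> 84" and eq: "(m - 4) * x * y = 2 * m * (x + y)"
  shows "x \<le> 20" "y \<le> 3360"
proof -
  have "((m - 4) * x) * y \<le> (4 * m) * y"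
    using eq mult_left_mono[of "x + y" "2 * y" "2 * m"] assms(2,3) by (simp add: algebra_simps)
  then have bound: "(m - 4) * x \<le> 4 * m" using assms(1,2) by simp
  show "x \<le> 20"
  proof (rule ccontr)
    assume "\<not> x \<le> 20"
    then have "(m - 4) * 21 \<le> (m - 4) * x" using assms(3) by (intro mult_left_mono) auto
    moreover have "(m - 4) * 21 = 21 * m - 84" by simp
    ultimately show False using bound assms(3) by linarith
  qed
  have y_eq: "y * ((m - 4) * x - 2 * m) = 2 * m * x" using eq by (simp add: algebra_simps)
  moreover have "0 < 2 * m * x" using assms(1,3) by simp
  ultimately have "0 < y * ((m - 4) * x - 2 * m)" by simp
  then have "1 \<le> (m - 4) * x - 2 * m" using assms(1,2) by (simp add: zero_less_mult_iff)
  then have "y * 1 \<le> y * ((m - 4) * x - 2 * m)" using assms(1,2) by (intro mult_left_mono) auto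
  then have "y \<le> 2 * m * x" using y_eq by simp
  also have "\<dots> \<le> 2 * 84 * 20"
    using \<open>x \<le> 20\<close> assms(1,3,4) by (intro mult_mono) auto
  finally show "y \<le> 3360" by simp
qed

lemma hurwitz_equation_bounds:
  fixes x y m :: int
  assumes "1 \<le> x" "1 \<le> y" "0 \<le> m" and eq: "m * (x * y - 2 * x - 2 * y) = 4 * x * y"
  shows "m \<le> 84" "x \<le> 3360" "y \<le> 3360"
proof -
  define D where "D = x * y - 2 * x - 2 * y"
  have "0 < m * D" using eq assms(1,2) unfolding D_def by simp
  then have "0 < D" using assms(3) by (simp add: zero_less_mult_iff)
  have "x * y \<le> 21 * D" using hurwitz_gap assms(1,2) \<open>0 < D\<close> unfolding D_def by blast
  then have "m * D \<le> 84 * D" using eq unfolding D_def by simp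
  then show "m \<le> 84" using \<open>0 < D\<close> by simp
  have "4 * D < m * D" using eq assms(1,2) unfolding D_def by simp
  then have "5 \<le> m" using \<open>0 < D\<close> by simp
  have xy: "(m - 4) * x * y = 2 * m * (x + y)" and yx: "(m - 4) * y * x = 2 * m * (y + x)"
    using eq by (simp_all add: algebra_simps)
  have "x \<le> 3360 \<and> y \<le> 3360"
  proof (cases "x \<le> y")
    case True
    then show ?thesis
      using hurwitz_equation_bound_ordered[OF assms(1) True \<open>5 \<le> m\<close> \<open>m \<le> 84\<close> xy] by simp
  next
    case False
    then show ?thesis
      using hurwitz_equation_bound_ordered[OF assms(2) _ \<open>5 \<le> m\<close> \<open>m \<le> 84\<close> yx] by simp
  qed
  then show "x \<le> 3360" "y \<le> 3360" by simp_all
qed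

section \<open>Fixed points of actions of groups of prime order\<close>

lemma group_action_restrictI:
  fixes H (structure)
  assumes "group H"
    and closed: "\<And>a x. a \<in> carrier H \<Longrightarrow> x \<in> E \<Longrightarrow> f a x \<in> E"
    and compose: "\<And>a b x. \<lbrakk>a \<in> carrier H; b \<in> carrier H; x \<in> E\<rbrakk> \<Longrightarrow> f (a \<otimes> b) x = f a (f b x)"
    and unit: "\<And>x. x \<in> E \<Longrightarrow> f \<one> x = x"
  shows "group_action H E (\<lambda>a. restrict (f a) E)"
proof -
  interpret group H by fact
  have "restrict (f a) E \<in> Bij E" if a: "a \<in> carrier H" for a
  proof -
    have "f (inv a) (f a x) = x" "f a (f (inv a) x) = x" if "x \<in> E" for x
      using compose[of "inv a" a x] compose[of a "inv a" x] unit[of x] a that by auto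
    then have "bij_betw (f a) E E"
      using a closed by (intro bij_betwI[where g = "f (inv a)"]) auto
    then show ?thesis unfolding Bij_def by (auto simp: bij_betw_def inj_on_def)
  qed
  then have "(\<lambda>a. restrict (f a) E) \<in> hom H (BijGroup E)"
    unfolding hom_def BijGroup_def
    by (auto simp: compose_def compose closed restrict_def fun_eq_iff)
  then show ?thesis
    unfolding group_action_def group_hom_def group_hom_axioms_def
    using group_BijGroup is_group by blast
qed

lemma (in group_action) card_orbit_of_moved_point:
  assumes "order G = q" "prime q" "finite E" "x \<in> E" "g \<in> carrier G" "\<phi> g x \<noteq> x"
  shows "card (orbit G \<phi> x) = q"
proof -
  have "card (orbit G \<phi> x) * card (stabilizer G \<phi> x) = q"
    using orbit_stabilizer_theorem[OF assms(4)] assms(1) by simp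
  then have "card (orbit G \<phi> x) dvd q" by (metis dvd_triv_left)
  moreover have "card {x, \<phi> g x} \<le> card (orbit G \<phi> x)"
  proof (rule card_mono)
    have "orbit G \<phi> x \<subseteq> E" using element_image assms(4) unfolding orbit_def by auto
    then show "finite (orbit G \<phi> x)" using \<open>finite E\<close> finite_subset by blast
    show "{x, \<phi> g x} \<subseteq> orbit G \<phi> x"
      using orbit_refl[OF assms(4)] assms(5) unfolding orbit_def by auto
  qed
  then have "card (orbit G \<phi> x) \<noteq> 1" using assms(6) by auto
  ultimately show ?thesis using \<open>prime q\<close> unfolding prime_nat_iff by blast
qed

lemma card_fixed_points_mod_prime_order:
  fixes H (structure)
  assumes "group H" and "order H = q" and "prime q" and "finite E"
    and closed: "\<And>a x. a \<in> carrier H \<Longrightarrow> x \<in> E \<Longrightarrow> f a x \<in> E"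
    and compose: "\<And>a b x. \<lbrakk>a \<in> carrier H; b \<in> carrier H; x \<in> E\<rbrakk> \<Longrightarrow> f (a \<otimes> b) x = f a (f b x)"
    and unit: "\<And>x. x \<in> E \<Longrightarrow> f \<one> x = x"
  shows "card E mod q = card {x \<in> E. \<forall>a \<in> carrier H. f a x = x} mod q"
proof -
  interpret group H by fact
  define \<phi> where "\<phi> = (\<lambda>a. restrict (f a) E)"
  interpret group_action H E \<phi>
    unfolding \<phi>_def by (rule group_action_restrictI[OF \<open>group H\<close> closed compose unit])
  define F where "F = {x \<in> E. \<forall>a \<in> carrier H. f a x = x}"
  define Orbs where "Orbs = {orbit H \<phi> x | x. x \<in> E - F}"
  have moved_orbit: "orbit H \<phi> x \<subseteq> E - F" if x: "x \<in> E - F" for x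
  proof
    fix y assume "y \<in> orbit H \<phi> x"
    then obtain a where a: "a \<in> carrier H" "y = f a x" using x unfolding orbit_def \<phi>_def by auto
    moreover have "f (inv a) y = x" using a compose[of "inv a" a x] unit x by auto
    ultimately have "y \<in> F \<Longrightarrow> y = x" unfolding F_def by auto
    then show "y \<in> E - F" using a x closed by auto
  qed
  have union: "\<Union> Orbs = E - F"
    using moved_orbit orbit_refl unfolding Orbs_def by blast
  have "q * card Orbs = card (\<Union> Orbs)"
  proof (rule card_partition)
    have "Orbs \<subseteq> Pow E" using moved_orbit unfolding Orbs_def by auto
    then show "finite Orbs" using \<open>finite E\<close> by (metis finite_Pow_iff finite_subset)
    show "finite (\<Union> Orbs)" using union \<open>finite E\<close> by simp
    show "card c = q" if "c \<in> Orbs" for c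
      using that card_orbit_of_moved_point[OF assms(2-4)] unfolding Orbs_def F_def \<phi>_def by auto
    show "c1 \<inter> c2 = {}" if "c1 \<in> Orbs" "c2 \<in> Orbs" "c1 \<noteq> c2" for c1 c2
    proof -
      have "c1 \<in> orbits H E \<phi>" "c2 \<in> orbits H E \<phi>"
        using that(1,2) unfolding Orbs_def orbits_def by auto
      then show ?thesis using disjoint_union that(3) by blast
    qed
  qed
  moreover have "card E = card F + card (E - F)"
    using card_Int_Diff[OF \<open>finite E\<close>, of F] unfolding F_def by (simp add: Int_absorb1)
  ultimately have "card E = card F + q * card Orbs" using union by simp
  then show ?thesis unfolding F_def by simp
qed

section \<open>Subgroups and their conjugates\<close>

context group
begin

lemma inv_mult_cancel_left [simp]:
  "a \<in> carrier G \<Longrightarrow> y \<in> carrier G \<Longrightarrow> inv a \<otimes> (a \<otimes> y) = y"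
  by (simp add: m_assoc[symmetric])

lemma mult_inv_cancel_left [simp]:
  "a \<in> carrier G \<Longrightarrow> y \<in> carrier G \<Longrightarrow> a \<otimes> (inv a \<otimes> y) = y"
  by (simp add: m_assoc[symmetric])

lemma card_subgroup_dvd:
  assumes "subgroup H G" "subgroup K G" "H \<subseteq> K"
  shows "card H dvd card K"
proof -
  have "card (rcosets\<^bsub>G\<lparr>carrier := K\<rparr>\<^esub> H) * card H = card K"
    using group.lagrange[OF subgroup_imp_group[OF assms(2)] subgroup_incl[OF assms]]
    unfolding order_def by simp
  then show ?thesis by (metis dvd_triv_right)
qed

lemma card_subgroup_dvd_order:
  assumes "subgroup H G"
  shows "card H dvd order G"
  using lagrange[OF assms] by (metis dvd_triv_right)

lemma finite_carrier_if_not_dvd_order: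
  assumes "\<not> n dvd order G"
  shows "finite (carrier G)"
  using assms unfolding order_def by (metis card.infinite dvd_0_right)

lemma pow_eq_one_coprime_card:
  assumes "subgroup H G" "z \<in> H" "z [^] n = \<one>" "coprime n (card H)"
  shows "z = \<one>"
proof -
  have z: "z \<in> carrier G" by (rule subgroup.mem_carrier[OF assms(1,2)])
  have "generate G {z} \<subseteq> H" by (rule generate_subgroup_incl) (use assms in auto)
  then have "ord z dvd card H"
    using card_subgroup_dvd[OF generate_is_subgroup assms(1)] z generate_pow_card[OF z] by simp
  moreover have "ord z dvd n" using assms(3) pow_eq_id[OF z] by simp
  ultimately have "ord z = 1" using coprime_common_divisor_nat[OF assms(4)] by blast
  then show ?thesis using ord_eq_1[OF z] by simp
qed

definition conjugates :: "'a set \<Rightarrow> 'a set set"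
  where "conjugates H = {g <# H #> inv g | g. g \<in> carrier G}"

lemma conjugate_eq_image:
  assumes "g \<in> carrier G" "X \<subseteq> carrier G"
  shows "g <# X #> inv g = (\<lambda>h. g \<otimes> h \<otimes> inv g) ` X"
  using assms unfolding l_coset_def r_coset_def by auto

lemma conjugate_one:
  assumes "X \<subseteq> carrier G"
  shows "\<one> <# X #> inv \<one> = X"
  using assms by (simp add: lcos_mult_one)

lemma conjugate_mult:
  assumes "a \<in> carrier G" "b \<in> carrier G" "X \<subseteq> carrier G"
  shows "(a \<otimes> b) <# X #> inv (a \<otimes> b) = a <# (b <# X #> inv b) #> inv a"
proof -
  have "b <# X #> inv b \<subseteq> carrier G"
    using assms by (auto simp: conjugate_eq_image)
  moreover have "(\<lambda>h. a \<otimes> h \<otimes> inv a) ` (\<lambda>h. b \<otimes> h \<otimes> inv b) ` X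
      = (\<lambda>h. (a \<otimes> b) \<otimes> h \<otimes> inv (a \<otimes> b)) ` X"
    unfolding image_image
    by (rule image_cong[OF refl]) (use assms in \<open>auto simp: m_assoc inv_mult_group subset_iff\<close>)
  ultimately show ?thesis
    using assms by (simp add: conjugate_eq_image)
qed

lemma card_conjugate:
  assumes "g \<in> carrier G" "X \<subseteq> carrier G"
  shows "card (g <# X #> inv g) = card X"
proof -
  have "inj_on (\<lambda>h. g \<otimes> h \<otimes> inv g) X"
    using assms by (auto simp: inj_on_def subset_iff)
  then show ?thesis using assms by (simp add: conjugate_eq_image card_image)
qed

lemma conjugate_pow:
  assumes "s \<in> carrier G" "x \<in> carrier G"
  shows "(s \<otimes> x \<otimes> inv s) [^] (k::nat) = s \<otimes> x [^] k \<otimes> inv s"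
  by (induction k) (use assms in \<open>simp_all add: m_assoc\<close>)

lemma subgroup_conjugate:
  assumes "subgroup H G" "g \<in> carrier G"
  shows "subgroup (g <# H #> inv g) G"
  using group_action.element_image[OF action_by_conjugation_on_subgroups_set assms(2)] assms
  by auto

lemma conjugate_by_member:
  assumes "subgroup H G" "a \<in> H"
  shows "a <# H #> inv a = H"
  using assms
  by (simp add: coset_join3 subgroup.mem_carrier subgroup.rcos_const subgroup.m_inv_closed is_group)

lemma normalizer_eq:
  assumes "H \<subseteq> carrier G"
  shows "normalizer G H = {g \<in> carrier G. g <# H #> inv g = H}"
  using assms unfolding normalizer_def stabilizer_def by auto

lemma subgroup_subset_normalizer:
  assumes "subgroup H G"
  shows "H \<subseteq> normalizer G H"
  using assms by (auto simp: normalizer_eq subgroup.subset conjugate_by_member subgroup.mem_carrier)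

lemma normalizer_eq_carrier_imp_normal:
  assumes "subgroup H G" "normalizer G H = carrier G"
  shows "H \<lhd> G"
proof (rule normal_invI[OF assms(1)])
  fix x h assume "x \<in> carrier G" "h \<in> H"
  moreover have "x <# H #> inv x = H"
    using assms \<open>x \<in> carrier G\<close> normalizer_eq[OF subgroup.subset] by blast
  ultimately show "x \<otimes> h \<otimes> inv x \<in> H"
    using subgroup.subset[OF assms(1)] conjugate_eq_image by blast
qed

lemma card_conjugates_mult_card_normalizer:
  assumes "subgroup H G"
  shows "card (conjugates H) * card (normalizer G H) = order G"
proof -
  let ?\<phi> = "\<lambda>g. \<lambda>H \<in> {H. H \<subseteq> carrier G}. g <# H #> inv g"
  have "H \<in> {H. H \<subseteq> carrier G}" using subgroup.subset[OF assms] by simp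
  then have "card (orbit G ?\<phi> H) * card (normalizer G H) = order G"
    unfolding normalizer_def
    by (rule group_action.orbit_stabilizer_theorem[OF action_by_conjugation_on_power_set])
  moreover have "orbit G ?\<phi> H = conjugates H"
    using subgroup.subset[OF assms] unfolding orbit_def conjugates_def by auto
  ultimately show ?thesis by simp
qed

section \<open>Sylow subgroups of prime order\<close>

lemma prime_order_subgroups_inter:
  assumes "subgroup X G" "subgroup Q G" "card X = q" "card Q = q" "prime q" "X \<noteq> Q"
  shows "X \<inter> Q = {\<one>}"
proof -
  have "subgroup (X \<inter> Q) G" using assms(1,2) by (rule subgroups_Inter_pair)
  then have "card (X \<inter> Q) dvd q"
    using card_subgroup_dvd assms(1,3) by blast
  moreover have "finite X" "finite Q"
    using assms(3,4,5) card_ge_0_finite prime_gt_0_nat by metis+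
  then have "card (X \<inter> Q) \<noteq> q"
    using assms(3,4,6) by (metis card_subset_eq inf_le1 inf_le2)
  ultimately have "card (X \<inter> Q) = 1"
    using \<open>prime q\<close> unfolding prime_nat_iff by blast
  moreover have "\<one> \<in> X \<inter> Q" using assms(1,2) by (simp add: subgroup.one_closed)
  ultimately show ?thesis by (metis card_1_singletonE singletonD)
qed

lemma prime_order_subgroup_cyclic:
  assumes Q: "subgroup Q G" and "card Q = q" "prime q"
  obtains g where "g \<in> Q" "ord g = q" "generate G {g} = Q"
proof -
  have "finite Q" using assms(2,3) card_ge_0_finite prime_gt_0_nat by metis
  have "Q \<noteq> {\<one>}" using assms(2,3) prime_gt_1_nat by force
  then obtain g where g: "g \<in> Q" "g \<noteq> \<one>" using subgroup.one_closed[OF Q] by blast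
  then have g_carrier: "g \<in> carrier G" using subgroup.mem_carrier[OF Q] by blast
  have gen: "generate G {g} \<subseteq> Q" by (rule generate_subgroup_incl) (use Q g in auto)
  then have "ord g dvd q"
    using card_subgroup_dvd[OF generate_is_subgroup Q] g_carrier generate_pow_card assms(2) by simp
  moreover have "ord g \<noteq> 1" using ord_eq_1[OF g_carrier] g(2) by simp
  ultimately have "ord g = q" using \<open>prime q\<close> unfolding prime_nat_iff by blast
  moreover have "generate G {g} = Q"
    using card_subset_eq[OF \<open>finite Q\<close> gen] generate_pow_card[OF g_carrier] calculation assms(2)
    by simp
  ultimately show ?thesis using that g(1) by blast
qed

lemma set_mult_eq_image:
  "H <#> K = (\<lambda>(x, y). x \<otimes> y) ` (H \<times> K)"
  unfolding set_mult_def by auto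

lemma subgroup_set_mult_if_normalizes:
  assumes X: "subgroup X G" and Q: "subgroup Q G"
    and normalizes: "\<And>a. a \<in> Q \<Longrightarrow> a <# X #> inv a = X"
  shows "subgroup (X <#> Q) G"
proof -
  have XG: "X \<subseteq> carrier G" and QG: "Q \<subseteq> carrier G"
    using X Q subgroup.subset by auto
  have conj_closed: "a \<otimes> y \<otimes> inv a \<in> X" if "a \<in> Q" "y \<in> X" for a y
  proof -
    have "a \<otimes> y \<otimes> inv a \<in> a <# X #> inv a" using that XG QG conjugate_eq_image by auto
    then show ?thesis using normalizes[OF that(1)] by simp
  qed
  show ?thesis
    unfolding set_mult_eq_image
  proof
    show "(\<lambda>(x, y). x \<otimes> y) ` (X \<times> Q) \<subseteq> carrier G" using XG QG by auto
    show "\<one> \<in> (\<lambda>(x, y). x \<otimes> y) ` (X \<times> Q)" using X Q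
      by (auto intro!: image_eqI[where x="(\<one>, \<one>)"] simp: subgroup.one_closed)
  next
    fix u v assume "u \<in> (\<lambda>(x, y). x \<otimes> y) ` (X \<times> Q)" "v \<in> (\<lambda>(x, y). x \<otimes> y) ` (X \<times> Q)"
    then obtain x1 h1 x2 h2 where u: "u = x1 \<otimes> h1" "x1 \<in> X" "h1 \<in> Q"
      and v: "v = x2 \<otimes> h2" "x2 \<in> X" "h2 \<in> Q" by auto
    have "x1 \<in> carrier G" "x2 \<in> carrier G" "h1 \<in> carrier G" "h2 \<in> carrier G"
      using u v XG QG by auto
    then have "u \<otimes> v = (x1 \<otimes> (h1 \<otimes> x2 \<otimes> inv h1)) \<otimes> (h1 \<otimes> h2)"
      using u v by (simp add: m_assoc)
    moreover have "x1 \<otimes> (h1 \<otimes> x2 \<otimes> inv h1) \<in> X"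
      using conj_closed u v X by (simp add: subgroup.m_closed)
    moreover have "h1 \<otimes> h2 \<in> Q" using u v Q by (simp add: subgroup.m_closed)
    ultimately show "u \<otimes> v \<in> (\<lambda>(x, y). x \<otimes> y) ` (X \<times> Q)" by force
  next
    fix u assume "u \<in> (\<lambda>(x, y). x \<otimes> y) ` (X \<times> Q)"
    then obtain x h where u: "u = x \<otimes> h" "x \<in> X" "h \<in> Q" by auto
    have "x \<in> carrier G" "h \<in> carrier G" using u XG QG by auto
    then have "inv u = (inv h \<otimes> inv x \<otimes> inv (inv h)) \<otimes> inv h"
      using u by (simp add: m_assoc inv_mult_group)
    moreover have "inv h \<otimes> inv x \<otimes> inv (inv h) \<in> X"
      using conj_closed[of "inv h" "inv x"] u X Q by (simp add: subgroup.m_inv_closed)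
    moreover have "inv h \<in> Q" using u Q by (simp add: subgroup.m_inv_closed)
    ultimately show "inv u \<in> (\<lambda>(x, y). x \<otimes> y) ` (X \<times> Q)" by force
  qed
qed

lemma card_set_mult_if_inter_trivial:
  assumes X: "subgroup X G" and Q: "subgroup Q G" and "X \<inter> Q = {\<one>}"
  shows "card (X <#> Q) = card X * card Q"
proof -
  have "inj_on (\<lambda>(x, h). x \<otimes> h) (X \<times> Q)"
  proof (rule inj_onI, clarify)
    fix x1 h1 x2 h2 assume a: "x1 \<in> X" "h1 \<in> Q" "x2 \<in> X" "h2 \<in> Q" "x1 \<otimes> h1 = x2 \<otimes> h2"
    then have carrier: "x1 \<in> carrier G" "x2 \<in> carrier G" "h1 \<in> carrier G" "h2 \<in> carrier G"
      using subgroup.mem_carrier[OF X] subgroup.mem_carrier[OF Q] by auto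
    then have "x1 = x2 \<otimes> h2 \<otimes> inv h1" using inv_solve_right a(5) by simp
    then have "inv x2 \<otimes> x1 = h2 \<otimes> inv h1" using carrier by (simp add: m_assoc)
    moreover have "inv x2 \<otimes> x1 \<in> X" "h2 \<otimes> inv h1 \<in> Q"
      using a X Q by (simp_all add: subgroup.m_closed subgroup.m_inv_closed)
    ultimately have "inv x2 \<otimes> x1 = \<one>" using \<open>X \<inter> Q = {\<one>}\<close> by auto
    then have "x1 = x2" using carrier inv_solve_left'[of \<one> x2 x1] by simp
    then show "x1 = x2 \<and> h1 = h2" using a(5) carrier by simp
  qed
  then show ?thesis unfolding set_mult_eq_image by (simp add: card_image card_cartesian_product)
qed

lemma prime_order_subgroup_normalized_eq:
  assumes X: "subgroup X G" and Q: "subgroup Q G" and "card X = q" "card Q = q" "prime q"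
    and "\<not> q\<^sup>2 dvd order G"
    and normalizes: "\<And>a. a \<in> Q \<Longrightarrow> a <# X #> inv a = X"
  shows "X = Q"
proof (rule ccontr)
  assume "X \<noteq> Q"
  then have "X \<inter> Q = {\<one>}" using prime_order_subgroups_inter assms by blast
  then have "card (X <#> Q) = q\<^sup>2"
    using card_set_mult_if_inter_trivial[OF X Q] assms(3,4) by (simp add: power2_eq_square)
  then show False
    using card_subgroup_dvd_order[OF subgroup_set_mult_if_normalizes[OF X Q normalizes]]
      \<open>\<not> q\<^sup>2 dvd order G\<close> by simp
qed

lemma conjugates_normalized_by_prime_order_subgroup:
  assumes Q: "subgroup Q G" and "card Q = q" "prime q" "\<not> q\<^sup>2 dvd order G"
  shows "{X \<in> conjugates Q. \<forall>a \<in> Q. a <# X #> inv a = X} = {Q}"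
proof
  have QG: "Q \<subseteq> carrier G" using Q subgroup.subset by blast
  then have "Q = \<one> <# Q #> inv \<one>" using conjugate_one by simp
  then have "Q \<in> conjugates Q" unfolding conjugates_def by blast
  then show "{Q} \<subseteq> {X \<in> conjugates Q. \<forall>a \<in> Q. a <# X #> inv a = X}"
    using conjugate_by_member[OF Q] by simp
  show "{X \<in> conjugates Q. \<forall>a \<in> Q. a <# X #> inv a = X} \<subseteq> {Q}"
  proof clarify
    fix X assume X: "X \<in> conjugates Q" "\<forall>a \<in> Q. a <# X #> inv a = X"
    then obtain g where g: "g \<in> carrier G" "X = g <# Q #> inv g"
      unfolding conjugates_def by auto
    show "X = Q"
    proof (rule prime_order_subgroup_normalized_eq[OF _ Q _ \<open>card Q = q\<close> \<open>prime q\<close>])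
      show "subgroup X G" using subgroup_conjugate[OF Q g(1)] g(2) by simp
      show "card X = q" using card_conjugate[OF g(1) QG] g(2) \<open>card Q = q\<close> by simp
      show "a <# X #> inv a = X" if "a \<in> Q" for a using X(2) that by simp
    qed fact
  qed
qed

lemma card_conjugates_mod_prime:
  assumes Q: "subgroup Q G" and "card Q = q" "prime q" "\<not> q\<^sup>2 dvd order G"
  shows "card (conjugates Q) mod q = 1"
proof -
  define H where "H = G\<lparr>carrier := Q\<rparr>"
  have QG: "Q \<subseteq> carrier G" using Q subgroup.subset by blast
  have conjugate_subset: "X \<subseteq> carrier G" if "X \<in> conjugates Q" for X
    using that QG by (fastforce simp: conjugates_def conjugate_eq_image)
  have "finite (conjugates Q)"
    using conjugate_subset finite_carrier_if_not_dvd_order[OF \<open>\<not> q\<^sup>2 dvd order G\<close>]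
    by (metis Pow_iff finite_Pow_iff finite_subset subsetI)
  have "card (conjugates Q) mod q
      = card {X \<in> conjugates Q. \<forall>a \<in> carrier H. a <# X #> inv a = X} mod q"
  proof (rule card_fixed_points_mod_prime_order[of H])
    show "group H" unfolding H_def using Q by (rule subgroup_imp_group)
    show "order H = q" unfolding H_def order_def using \<open>card Q = q\<close> by simp
    show "a <# X #> inv a \<in> conjugates Q" if a: "a \<in> carrier H" and X: "X \<in> conjugates Q" for a X
    proof -
      obtain g where g: "g \<in> carrier G" "X = g <# Q #> inv g"
        using X unfolding conjugates_def by auto
      have "a \<in> carrier G" using a QG unfolding H_def by auto
      then show ?thesis
        using conjugate_mult[OF _ g(1) QG] g unfolding conjugates_def by auto
    qed
    show "(a \<otimes>\<^bsub>H\<^esub> b) <# X #> inv (a \<otimes>\<^bsub>H\<^esub> b) = a <# (b <# X #> inv b) #> inv a"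
      if "a \<in> carrier H" "b \<in> carrier H" "X \<in> conjugates Q" for a b X
      using conjugate_mult[of a b X] that conjugate_subset[of X] QG unfolding H_def by auto
    show "\<one>\<^bsub>H\<^esub> <# X #> inv \<one>\<^bsub>H\<^esub> = X" if "X \<in> conjugates Q" for X
      using conjugate_one conjugate_subset[OF that] unfolding H_def by simp
  qed fact+
  also have "{X \<in> conjugates Q. \<forall>a \<in> carrier H. a <# X #> inv a = X} = {Q}"
    using conjugates_normalized_by_prime_order_subgroup[OF assms] unfolding H_def by simp
  finally show ?thesis using prime_gt_1_nat[OF \<open>prime q\<close>] by simp
qed

lemma normal_subgroup_centralized_by_prime_order_subgroup:
  assumes P: "P \<lhd> G" and "finite P" and Q: "subgroup Q G" and "card Q = q" "prime q"
    and "card P < q"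
  shows "\<forall>a \<in> P. \<forall>h \<in> Q. h \<otimes> a = a \<otimes> h"
proof -
  define H where "H = G\<lparr>carrier := Q\<rparr>"
  define F where "F = {z \<in> P. \<forall>b \<in> carrier H. b \<otimes> z \<otimes> inv b = z}"
  have PG: "P \<subseteq> carrier G" and QG: "Q \<subseteq> carrier G"
    using normal_imp_subgroup[OF P] Q subgroup.subset by auto
  have "card P mod q = card F mod q"
    unfolding F_def
  proof (rule card_fixed_points_mod_prime_order[of H q])
    show "group H" unfolding H_def using Q by (rule subgroup_imp_group)
    show "order H = q" unfolding H_def order_def using \<open>card Q = q\<close> by simp
    show "b \<otimes> z \<otimes> inv b \<in> P" if "b \<in> carrier H" "z \<in> P" for b z
      using normal_invE(2)[OF P] that QG unfolding H_def by auto
    show "(b \<otimes>\<^bsub>H\<^esub> c) \<otimes> z \<otimes> inv (b \<otimes>\<^bsub>H\<^esub> c) = b \<otimes> (c \<otimes> z \<otimes> inv c) \<otimes> inv b"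
      if "b \<in> carrier H" "c \<in> carrier H" "z \<in> P" for b c z
    proof -
      have "b \<in> carrier G" "c \<in> carrier G" "z \<in> carrier G" using that QG PG unfolding H_def by auto
      then show ?thesis unfolding H_def by (simp add: m_assoc inv_mult_group)
    qed
    show "\<one>\<^bsub>H\<^esub> \<otimes> z \<otimes> inv \<one>\<^bsub>H\<^esub> = z" if "z \<in> P" for z
      using that PG unfolding H_def by auto
  qed fact+
  moreover have "F \<subseteq> P" unfolding F_def by auto
  then have "card F \<le> card P" using \<open>finite P\<close> by (rule card_mono[rotated])
  ultimately have "card F = card P" using \<open>card P < q\<close> by simp
  then have "F = P" using \<open>F \<subseteq> P\<close> \<open>finite P\<close> card_subset_eq by blast
  show ?thesis
  proof (intro ballI)
    fix a h assume "a \<in> P" "h \<in> Q"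
    then have "h \<otimes> a \<otimes> inv h = a" and carrier: "a \<in> carrier G" "h \<in> carrier G"
      using \<open>F = P\<close> PG QG unfolding F_def H_def by auto
    then show "h \<otimes> a = a \<otimes> h" using inv_solve_right' by simp
  qed
qed

lemma normal_subgroup_subset_normalizer:
  assumes P: "P \<lhd> G" and "finite P" and Q: "subgroup Q G" and "card Q = q" "prime q"
    and "card P < q"
  shows "P \<subseteq> normalizer G Q"
proof -
  have commute: "\<forall>a \<in> P. \<forall>h \<in> Q. h \<otimes> a = a \<otimes> h"
    by (rule normal_subgroup_centralized_by_prime_order_subgroup) fact+
  have "a <# Q #> inv a = Q" if "a \<in> P" for a
  proof -
    have a: "a \<in> carrier G" using that subgroup.mem_carrier[OF normal_imp_subgroup[OF P]] by blast
    have "a \<otimes> h \<otimes> inv a = h" if "h \<in> Q" for h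
      using commute \<open>a \<in> P\<close> that a subgroup.mem_carrier[OF Q] by (metis inv_solve_right' m_closed)
    then show ?thesis using conjugate_eq_image[OF a subgroup.subset[OF Q]] by simp
  qed
  then show ?thesis
    using subgroup.subset[OF normal_imp_subgroup[OF P]] normalizer_eq[OF subgroup.subset[OF Q]]
    by auto
qed

lemma normal_if_card_conjugates_eq_one:
  assumes "finite (carrier G)" "subgroup Q G" "card (conjugates Q) = 1"
  shows "Q \<lhd> G"
proof -
  have "card (normalizer G Q) = order G"
    using card_conjugates_mult_card_normalizer[OF assms(2)] assms(3) by simp
  then show ?thesis
    using card_subset_eq[OF assms(1) subgroup.subset[OF normalizer_imp_subgroup]]
      subgroup.subset[OF assms(2)] normalizer_eq_carrier_imp_normal[OF assms(2)]
    unfolding order_def by simp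
qed

lemma prime_sylow_subgroup_count:
  assumes "prime q" and order: "order G = q * k" and "\<not> q dvd k"
  obtains Q where "subgroup Q G" "card Q = q"
    "card (conjugates Q) dvd k" "card (conjugates Q) mod q = 1"
proof -
  have not_dvd: "\<not> q\<^sup>2 dvd order G"
    using order not_prime_square_dvd[OF assms(1,3)] by simp
  have "finite (carrier G)" by (rule finite_carrier_if_not_dvd_order[OF not_dvd])
  then obtain Q where Q: "subgroup Q G" "card Q = q"
    using sylow_thm[OF \<open>prime q\<close> is_group, of 1 k] order by auto
  have "subgroup (normalizer G Q) G" by (rule normalizer_imp_subgroup[OF subgroup.subset[OF Q(1)]])
  then obtain c where c: "card (normalizer G Q) = q * c"
    using card_subgroup_dvd[OF Q(1) _ subgroup_subset_normalizer[OF Q(1)]] Q(2) by blast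
  have "card (conjugates Q) * (q * c) = q * k"
    using card_conjugates_mult_card_normalizer[OF Q(1)] c order by simp
  then have "k = card (conjugates Q) * c" using prime_gt_0_nat[OF \<open>prime q\<close>] by simp
  then have "card (conjugates Q) dvd k" ..
  moreover have "card (conjugates Q) mod q = 1"
    using card_conjugates_mod_prime[OF Q \<open>prime q\<close> not_dvd] .
  ultimately show ?thesis using that Q by blast
qed

text \<open>A normal subgroup of order \<open>p\<close> lies in the normalizer of \<open>Q\<close>, so the number of conjugates
  of \<open>Q\<close> divides \<open>m < q\<close>; being \<open>1\<close> modulo \<open>q\<close>, it is \<open>1\<close>.\<close>

lemma prime_order_subgroup_normal_if_smaller_normal:
  assumes P: "P \<lhd> G" "card P = p" and Q: "subgroup Q G" "card Q = q"
    and "prime p" "prime q" "p < q" and order: "order G = p * q * m" and "0 < m" "m < q"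
  shows "Q \<lhd> G"
proof -
  have not_dvd: "\<not> q\<^sup>2 dvd order G"
    using not_prime_square_dvd_mult_of_less[OF \<open>prime q\<close> prime_gt_0_nat[OF \<open>prime p\<close>]] assms(7,9,10)
      order by simp
  have fin: "finite (carrier G)" by (rule finite_carrier_if_not_dvd_order[OF not_dvd])
  define N where "N = normalizer G Q"
  have N: "subgroup N G"
    unfolding N_def by (rule normalizer_imp_subgroup[OF subgroup.subset[OF Q(1)]])
  have "finite P" using P(2) prime_gt_0_nat[OF \<open>prime p\<close>] card_ge_0_finite[of P] by simp
  then have "p dvd card N"
    using card_subgroup_dvd[OF normal_imp_subgroup[OF P(1)] N] P(2) assms(6,7)
      normal_subgroup_subset_normalizer[OF P(1) _ Q] unfolding N_def by simp
  moreover have "q dvd card N"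
    using card_subgroup_dvd[OF Q(1) N subgroup_subset_normalizer[OF Q(1), folded N_def]] Q(2)
    by simp
  ultimately have "p * q dvd card N"
    using divides_mult primes_coprime[OF \<open>prime p\<close> \<open>prime q\<close>] \<open>p < q\<close> by simp
  then obtain c where c: "card N = p * q * c" by blast
  have "card (conjugates Q) * (p * q * c) = p * q * m"
    using card_conjugates_mult_card_normalizer[OF Q(1)] c order unfolding N_def by simp
  then have "card (conjugates Q) * c = m"
    using prime_gt_0_nat[OF \<open>prime p\<close>] prime_gt_0_nat[OF \<open>prime q\<close>] by simp
  then have "card (conjugates Q) < q"
    using dvd_imp_le[OF dvdI, of m "card (conjugates Q)" c] \<open>0 < m\<close> \<open>m < q\<close> by simp
  then have "card (conjugates Q) = 1"
    using card_conjugates_mod_prime[OF Q \<open>prime q\<close> not_dvd] mod_eq_one_imp_less by fastforce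
  then show ?thesis using normal_if_card_conjugates_eq_one[OF fin Q(1)] by simp
qed

lemma normal_subgroup_of_large_prime_order:
  assumes "finite (carrier G)" "prime p" "prime q" "p < q"
    and order: "order G = p * q * m" and "m \<le> b" and "2 * b * b \<le> q"
  obtains Q where "Q \<lhd> G" "card Q = q"
proof -
  have "0 < m" using order \<open>finite (carrier G)\<close> order_gt_0_iff_finite by (cases m) auto
  then have "b \<le> b * b" using \<open>m \<le> b\<close> by simp
  then have "b < q" "m < q" using \<open>0 < m\<close> assms(6,7) by linarith+
  have "\<not> q dvd p * m"
    using not_prime_dvd_mult_of_less[OF \<open>prime q\<close>] prime_gt_0_nat[OF \<open>prime p\<close>] \<open>p < q\<close>
      \<open>0 < m\<close> \<open>m < q\<close> by simp
  moreover have "order G = q * (p * m)" using order by simp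
  ultimately obtain Q where Q: "subgroup Q G" "card Q = q"
      and nq: "card (conjugates Q) dvd p * m" "card (conjugates Q) mod q = 1"
    using prime_sylow_subgroup_count[OF \<open>prime q\<close>] by metis
  show ?thesis
  proof (rule dvd_prime_mult_cases[OF \<open>prime p\<close> nq \<open>0 < m\<close> \<open>m \<le> b\<close> \<open>b < q\<close>])
    assume "card (conjugates Q) = 1"
    then show ?thesis using that normal_if_card_conjugates_eq_one[OF assms(1) Q(1)] Q(2) by blast
  next
    fix d assume d: "card (conjugates Q) = p * d" "0 < d" "d \<le> b"
    then have "q < p * d"
      using mod_eq_one_imp_less nq(2) prime_gt_1_nat[OF \<open>prime p\<close>] by fastforce
    have "b < p"
    proof (rule ccontr)
      assume "\<not> b < p"
      then have "p * d \<le> b * b" using d(3) by (simp add: mult_mono)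
      then show False using \<open>q < p * d\<close> \<open>b \<le> b * b\<close> assms(7) by linarith
    qed
    then have "\<not> p dvd q * m"
      using primes_dvd_imp_eq[OF \<open>prime p\<close> \<open>prime q\<close>] \<open>p < q\<close> \<open>0 < m\<close> \<open>m \<le> b\<close>
        prime_dvd_mult_iff[OF \<open>prime p\<close>] by (auto dest: dvd_imp_le)
    moreover have "order G = p * (q * m)" using order by simp
    ultimately obtain P where P: "subgroup P G" "card P = p"
        and np: "card (conjugates P) dvd q * m" "card (conjugates P) mod p = 1"
      using prime_sylow_subgroup_count[OF \<open>prime p\<close>] by metis
    show ?thesis
    proof (rule dvd_prime_mult_cases[OF \<open>prime q\<close> np \<open>0 < m\<close> \<open>m \<le> b\<close> \<open>b < p\<close>])
      assume "card (conjugates P) = 1"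
      then have "P \<lhd> G" using normal_if_card_conjugates_eq_one[OF assms(1) P(1)] by simp
      then show ?thesis
        using prime_order_subgroup_normal_if_smaller_normal[OF _ P(2) Q] that assms(2-5)
          \<open>0 < m\<close> \<open>m < q\<close> Q(2) by blast
    next
      fix e assume e: "card (conjugates P) = q * e" "0 < e" "e \<le> b"
      have "q < 2 * b * b"
        using mutual_residues_bound[OF prime_gt_1_nat[OF \<open>prime p\<close>] \<open>p < q\<close> e(2) d(3) e(3)]
          nq(2) np(2) d(1) e(1) by simp
      then show ?thesis using assms(7) by simp
    qed
  qed
qed

end

section \<open>The transfer into a central subgroup\<close>

text \<open>The classical transfer; as \<open>Q\<close> is central in \<open>C\<close>, no abelianization is needed.\<close>

locale central_transfer = group G for G (structure) +
  fixes C Q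
  assumes subgroup_C: "subgroup C G" and subgroup_Q: "subgroup Q G" and Q_subset_C: "Q \<subseteq> C"
    and central: "\<And>a b. a \<in> Q \<Longrightarrow> b \<in> C \<Longrightarrow> a \<otimes> b = b \<otimes> a"
begin

abbreviation "CG \<equiv> G\<lparr>carrier := C\<rparr>"
abbreviation "QG \<equiv> G\<lparr>carrier := Q\<rparr>"

definition cosets :: "'a set set"
  where "cosets = {Q #> c | c. c \<in> C}"

definition rep :: "'a set \<Rightarrow> 'a"
  where "rep T = (SOME c. c \<in> T)"

definition transfer_factor :: "'a \<Rightarrow> 'a set \<Rightarrow> 'a"
  where "transfer_factor a T = rep T \<otimes> a \<otimes> inv (rep (T #> a))"

definition transfer :: "'a \<Rightarrow> 'a"
  where "transfer a = finprod QG (transfer_factor a) cosets"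

lemma C_carrier: "c \<in> C \<Longrightarrow> c \<in> carrier G"
  by (rule subgroup.mem_carrier[OF subgroup_C])

lemma Q_carrier: "h \<in> Q \<Longrightarrow> h \<in> carrier G"
  by (rule subgroup.mem_carrier[OF subgroup_Q])

lemma cosets_eq_rcosets: "cosets = rcosets\<^bsub>CG\<^esub> Q"
  unfolding RCOSETS_def cosets_def r_coset_def by auto

lemma card_cosets: "card cosets * card Q = card C"
  using group.lagrange[OF subgroup_imp_group[OF subgroup_C]
      subgroup_incl[OF subgroup_Q subgroup_C Q_subset_C]]
  by (simp add: cosets_eq_rcosets order_def)

lemma rep_coset:
  assumes "T \<in> cosets"
  shows "rep T \<in> T" "rep T \<in> C" "Q #> rep T = T"
proof -
  obtain c where c: "c \<in> C" "T = Q #> c" using assms cosets_def by auto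
  then have "c \<in> T" using rcos_self[OF C_carrier subgroup_Q] by simp
  then show "rep T \<in> T" unfolding rep_def by (rule someI)
  moreover have "Q #> c \<subseteq> C"
    using c(1) Q_subset_C subgroup.m_closed[OF subgroup_C] unfolding r_coset_def by auto
  ultimately show "rep T \<in> C" using c(2) by auto
  show "Q #> rep T = T"
    using repr_independence[OF _ C_carrier subgroup_Q] \<open>rep T \<in> T\<close> c by simp
qed

lemma cosets_subset:
  assumes "T \<in> cosets"
  shows "T \<subseteq> carrier G"
  using r_coset_subset_G[OF subgroup.subset[OF subgroup_Q] C_carrier[OF rep_coset(2)[OF assms]]]
  by (simp add: rep_coset(3)[OF assms])

lemma coset_mult_in_cosets:
  assumes "T \<in> cosets" "a \<in> C"
  shows "T #> a \<in> cosets"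
proof -
  have "T #> a = Q #> (rep T \<otimes> a)"
    using coset_mult_assoc[OF subgroup.subset[OF subgroup_Q] C_carrier[OF rep_coset(2)[OF assms(1)]]
        C_carrier[OF assms(2)]]
    by (simp add: rep_coset(3)[OF assms(1)])
  moreover have "rep T \<otimes> a \<in> C"
    using rep_coset(2)[OF assms(1)] assms(2) subgroup.m_closed[OF subgroup_C] by blast
  ultimately show ?thesis unfolding cosets_def by blast
qed

lemma bij_coset_mult:
  assumes "a \<in> C"
  shows "bij_betw (\<lambda>T. T #> a) cosets cosets"
proof (rule bij_betwI[where g = "\<lambda>T. T #> inv a"])
  have a: "a \<in> carrier G" "inv a \<in> C"
    using assms C_carrier subgroup.m_inv_closed[OF subgroup_C] by auto
  show "(\<lambda>T. T #> a) \<in> cosets \<rightarrow> cosets" "(\<lambda>T. T #> inv a) \<in> cosets \<rightarrow> cosets"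
    using coset_mult_in_cosets assms a by auto
  show "T #> a #> inv a = T" "T #> inv a #> a = T" if "T \<in> cosets" for T
    using coset_mult_assoc[OF cosets_subset[OF that]] cosets_subset[OF that] a by simp_all
qed

lemma transfer_factor_in_Q:
  assumes "T \<in> cosets" "a \<in> C"
  shows "transfer_factor a T \<in> Q"
proof -
  have Ta: "T #> a \<in> cosets" using coset_mult_in_cosets[OF assms] .
  have "rep T \<otimes> a \<in> T #> a" using rep_coset(1)[OF assms(1)] unfolding r_coset_def by auto
  then obtain h where h: "h \<in> Q" "rep T \<otimes> a = h \<otimes> rep (T #> a)"
    using rep_coset(3)[OF Ta, symmetric] unfolding r_coset_def by auto
  moreover have "rep (T #> a) \<in> carrier G" using rep_coset(2)[OF Ta] C_carrier by simp
  ultimately have "transfer_factor a T = h"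
    unfolding transfer_factor_def using Q_carrier by (simp add: m_assoc)
  then show ?thesis using h by simp
qed

lemma transfer_factor_mult:
  assumes "T \<in> cosets" "a \<in> C" "b \<in> C"
  shows "transfer_factor (a \<otimes> b) T = transfer_factor a T \<otimes> transfer_factor b (T #> a)"
proof -
  have Ta: "T #> a \<in> cosets" using coset_mult_in_cosets[OF assms(1,2)] .
  have "T #> a #> b = T #> (a \<otimes> b)"
    using coset_mult_assoc[OF cosets_subset[OF assms(1)]] assms(2,3) C_carrier by simp
  moreover have "T #> (a \<otimes> b) \<in> cosets"
    using coset_mult_in_cosets[OF assms(1)] subgroup.m_closed[OF subgroup_C assms(2,3)] .
  then have "rep T \<in> carrier G" "rep (T #> a) \<in> carrier G" "rep (T #> (a \<otimes> b)) \<in> carrier G"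
    using rep_coset(2) assms(1) Ta C_carrier by auto
  ultimately show ?thesis
    unfolding transfer_factor_def using assms(2,3) C_carrier by (simp add: m_assoc)
qed

lemma comm_group_QG: "comm_group QG"
  using group.group_comm_groupI[OF subgroup_imp_group[OF subgroup_Q]] central Q_subset_C by auto

lemma transfer_hom: "transfer \<in> hom CG QG"
proof -
  interpret QG: comm_group QG by (rule comm_group_QG)
  have factor: "transfer_factor a \<in> cosets \<rightarrow> carrier QG" if "a \<in> C" for a
    using transfer_factor_in_Q that by auto
  have "transfer (a \<otimes> b) = transfer a \<otimes> transfer b" if a: "a \<in> C" and b: "b \<in> C" for a b
  proof -
    have shifted: "(\<lambda>T. transfer_factor b (T #> a)) \<in> cosets \<rightarrow> carrier QG"
      using factor[OF b] coset_mult_in_cosets[OF _ a] by auto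
    have "transfer (a \<otimes> b)
        = finprod QG (\<lambda>T. transfer_factor a T \<otimes>\<^bsub>QG\<^esub> transfer_factor b (T #> a)) cosets"
      unfolding transfer_def
      using factor[OF a] shifted transfer_factor_mult a b subgroup.m_closed[OF subgroup_Q]
      by (intro QG.finprod_cong') (auto simp: Pi_iff)
    also have "\<dots> = transfer a \<otimes>\<^bsub>QG\<^esub> finprod QG (\<lambda>T. transfer_factor b (T #> a)) cosets"
      unfolding transfer_def using factor[OF a] shifted by (rule QG.finprod_multf)
    also have "finprod QG (\<lambda>T. transfer_factor b (T #> a)) cosets = transfer b"
      unfolding transfer_def
      using QG.finprod_reindex[of "transfer_factor b" "\<lambda>T. T #> a" cosets] factor[OF b]
        bij_coset_mult[OF a]
      by (simp add: bij_betw_def)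
    finally show ?thesis by simp
  qed
  moreover have "transfer a \<in> Q" if "a \<in> C" for a
    using QG.finprod_closed[OF factor[OF that]] unfolding transfer_def by simp
  ultimately show ?thesis unfolding hom_def by auto
qed

lemma transfer_on_Q:
  assumes h: "h \<in> Q"
  shows "transfer h = h [^] card cosets"
proof -
  interpret QG: comm_group QG by (rule comm_group_QG)
  have "transfer_factor h T = h" if T: "T \<in> cosets" for T
  proof -
    have r: "rep T \<in> C" "rep T \<in> carrier G" using rep_coset(2)[OF T] C_carrier by auto
    have "T #> h = Q #> (rep T \<otimes> h)"
      using coset_mult_assoc[OF subgroup.subset[OF subgroup_Q] r(2) Q_carrier[OF h]]
      by (simp add: rep_coset(3)[OF T])
    also have "rep T \<otimes> h = h \<otimes> rep T" using central[OF h r(1)] by simp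
    also have "Q #> (h \<otimes> rep T) = T"
      using coset_mult_assoc[OF subgroup.subset[OF subgroup_Q] Q_carrier[OF h] r(2)]
        subgroup.rcos_const[OF subgroup_Q is_group h] by (simp add: rep_coset(3)[OF T])
    finally have "transfer_factor h T = rep T \<otimes> h \<otimes> inv (rep T)"
      unfolding transfer_factor_def by simp
    also have "\<dots> = h \<otimes> rep T \<otimes> inv (rep T)" using central[OF h r(1)] by simp
    also have "\<dots> = h" using r Q_carrier[OF h] by (simp add: m_assoc)
    finally show ?thesis .
  qed
  then have "transfer h = finprod QG (\<lambda>T. h) cosets"
    unfolding transfer_def using h by (intro QG.finprod_cong') auto
  also have "\<dots> = h [^] card cosets"
    using QG.finprod_const h by (simp add: nat_pow_consistent[symmetric])
  finally show ?thesis .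
qed

lemma pow_card_cosets_in_Q:
  assumes c: "c \<in> C"
  shows "c [^] card cosets \<in> Q"
proof -
  interpret CG: group CG by (rule subgroup_imp_group[OF subgroup_C])
  have "Q \<lhd> CG"
  proof (rule CG.normal_invI)
    show "subgroup Q CG" by (rule subgroup_incl[OF subgroup_Q subgroup_C Q_subset_C])
    show "x \<otimes>\<^bsub>CG\<^esub> h \<otimes>\<^bsub>CG\<^esub> inv\<^bsub>CG\<^esub> x \<in> Q" if "x \<in> carrier CG" "h \<in> Q" for x h
    proof -
      have "x \<in> C" using that(1) by simp
      then have "x \<otimes> h \<otimes> inv x = h"
        using central[OF that(2), symmetric] C_carrier Q_carrier[OF that(2)] by (simp add: m_assoc)
      then show ?thesis using that(2) m_inv_consistent[OF subgroup_C \<open>x \<in> C\<close>] by simp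
    qed
  qed
  then interpret normal Q CG .
  have "Q #>\<^bsub>CG\<^esub> c \<in> carrier (CG Mod Q)"
    unfolding FactGroup_def RCOSETS_def using c by auto
  then have "(Q #>\<^bsub>CG\<^esub> c) [^]\<^bsub>CG Mod Q\<^esub> card cosets = Q"
    using group.pow_order_eq_1[OF factorgroup_is_group]
    by (simp add: order_def FactGroup_def cosets_eq_rcosets)
  moreover have "Q #>\<^bsub>CG\<^esub> (c [^]\<^bsub>CG\<^esub> card cosets) = (Q #>\<^bsub>CG\<^esub> c) [^]\<^bsub>CG Mod Q\<^esub> card cosets"
    using hom_nat_pow[OF r_coset_hom_Mod] c factorgroup_is_group by simp
  moreover have "c [^]\<^bsub>CG\<^esub> card cosets = c [^] card cosets"
    by (simp add: nat_pow_consistent[symmetric])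
  ultimately have "Q #> c [^] card cosets = Q" by (simp add: r_coset_def)
  moreover have "c [^] card cosets \<in> carrier G" using C_carrier[OF c] by simp
  ultimately show ?thesis using rcos_self[OF _ subgroup_Q] by metis
qed

lemma not_dvd_card_cosets:
  assumes "prime q" "card Q = q" "\<not> q\<^sup>2 dvd order G"
  shows "\<not> q dvd card cosets"
proof
  assume "q dvd card cosets"
  then have "q\<^sup>2 dvd card C"
    using card_cosets assms(2) by (metis mult_dvd_mono power2_eq_square dvd_refl)
  then show False using card_subgroup_dvd_order[OF subgroup_C] assms(3) dvd_trans by blast
qed

lemma pow_card_cosets_eq_one:
  assumes "c \<in> C" "coprime (ord c) (card Q)"
  shows "c [^] card cosets = \<one>"
proof (rule pow_eq_one_coprime_card[OF subgroup_Q pow_card_cosets_in_Q[OF assms(1)] _ assms(2)])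
  show "(c [^] card cosets) [^] ord c = \<one>"
    using C_carrier[OF assms(1)] by (metis mult.commute nat_pow_one nat_pow_pow pow_ord_eq_1)
qed

theorem subgroup_pow_card_cosets_eq_one:
  assumes coprime: "coprime (card cosets) (card Q)"
  shows "subgroup {c \<in> C. c [^] card cosets = \<one>} G"
proof -
  interpret transfer: group_hom CG QG transfer
    unfolding group_hom_def group_hom_axioms_def
    using subgroup_imp_group[OF subgroup_C] subgroup_imp_group[OF subgroup_Q] transfer_hom by blast
  have "transfer c = \<one> \<longleftrightarrow> c [^] card cosets = \<one>" if c: "c \<in> C" for c
  proof -
    have transfer_pow: "transfer c [^] card cosets = transfer (c [^] card cosets)"
      using transfer.hom_nat_pow[of c "card cosets"] c by (simp add: nat_pow_consistent[symmetric])
    have "transfer c \<in> Q" using transfer_hom c unfolding hom_def by auto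
    define z where "z = c [^] card cosets"
    have "z \<in> Q" unfolding z_def using pow_card_cosets_in_Q[OF c] .
    show ?thesis
    proof
      assume "transfer c = \<one>"
      then have "z [^] card cosets = \<one>"
        using transfer_on_Q[OF \<open>z \<in> Q\<close>] transfer_pow unfolding z_def by simp
      then show "c [^] card cosets = \<one>"
        using pow_eq_one_coprime_card[OF subgroup_Q \<open>z \<in> Q\<close> _ coprime] unfolding z_def by simp
    next
      assume "c [^] card cosets = \<one>"
      then show "transfer c = \<one>"
        using pow_eq_one_coprime_card[OF subgroup_Q \<open>transfer c \<in> Q\<close> _ coprime] transfer_pow
          transfer.hom_one by simp
    qed
  qed
  then have "{c \<in> C. c [^] card cosets = \<one>} = kernel CG QG transfer"
    unfolding kernel_def by auto
  then show ?thesis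
    using incl_subgroup[OF subgroup_C transfer.subgroup_kernel] by simp
qed

end

section \<open>Groups generated by involutions with a normal subgroup of prime order\<close>

context group
begin

definition centralizer :: "'a \<Rightarrow> 'a set"
  where "centralizer g = {c \<in> carrier G. c \<otimes> g = g \<otimes> c}"

lemma subgroup_centralizer:
  assumes "g \<in> carrier G"
  shows "subgroup (centralizer g) G"
proof -
  have "centralizer g = stabilizer G (\<lambda>c. \<lambda>h \<in> carrier G. c \<otimes> h \<otimes> inv c) g"
    unfolding centralizer_def stabilizer_def
    using assms by (auto simp: inv_solve_right' m_closed)
  then show ?thesis
    using group_action.stabilizer_subgroup[OF action_by_conjugation assms] by simp
qed

lemma generate_subset_centralizer:
  assumes "g \<in> carrier G" "c \<in> centralizer g"
  shows "generate G {g} \<subseteq> centralizer c"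
proof (rule generate_subgroup_incl)
  show "subgroup (centralizer c) G"
    using assms(2) subgroup_centralizer unfolding centralizer_def by blast
  show "{g} \<subseteq> centralizer c" using assms unfolding centralizer_def by auto
qed

lemma commutes_if_mem_generate_centralizer:
  assumes "g \<in> carrier G" "c \<in> centralizer g" "a \<in> generate G {g}"
  shows "a \<otimes> c = c \<otimes> a"
  using generate_subset_centralizer[OF assms(1,2)] assms(3) unfolding centralizer_def by auto

lemma generate_subset_own_centralizer:
  assumes "g \<in> carrier G"
  shows "generate G {g} \<subseteq> centralizer g"
proof (rule generate_subgroup_incl[OF _ subgroup_centralizer[OF assms]])
  show "{g} \<subseteq> centralizer g" using assms unfolding centralizer_def by simp
qed

lemma normal_centralizer:
  assumes g: "g \<in> carrier G" and normal: "generate G {g} \<lhd> G"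
  shows "centralizer g \<lhd> G"
proof (rule normal_invI[OF subgroup_centralizer[OF g]])
  fix s c assume s: "s \<in> carrier G" and c: "c \<in> centralizer g"
  define g' where "g' = inv s \<otimes> g \<otimes> inv (inv s)"
  have "g \<in> generate G {g}" by (simp add: generate.incl)
  then have "g' \<in> generate G {g}"
    unfolding g'_def by (rule normal_invE(2)[OF normal inv_closed[OF s]])
  then have comm: "g' \<otimes> c = c \<otimes> g'" using commutes_if_mem_generate_centralizer[OF g c] by simp
  have carrier: "c \<in> carrier G" "g' \<in> carrier G"
    using c g s unfolding centralizer_def g'_def by auto
  have g_eq: "g = s \<otimes> g' \<otimes> inv s" unfolding g'_def using s g by (simp add: m_assoc)
  have "(s \<otimes> c \<otimes> inv s) \<otimes> g = s \<otimes> (c \<otimes> g') \<otimes> inv s"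
    using g_eq carrier s by (simp add: m_assoc)
  also have "\<dots> = s \<otimes> (g' \<otimes> c) \<otimes> inv s" using comm by simp
  also have "\<dots> = g \<otimes> (s \<otimes> c \<otimes> inv s)" using g_eq carrier s by (simp add: m_assoc)
  finally have "(s \<otimes> c \<otimes> inv s) \<otimes> g = g \<otimes> (s \<otimes> c \<otimes> inv s)" .
  then show "s \<otimes> c \<otimes> inv s \<in> centralizer g" using s carrier unfolding centralizer_def by simp
qed

text \<open>Take \<open>K = {c \<in> C. c [^] n = \<one>}\<close> with \<open>n = [C : \<langle>g\<rangle>]\<close>;
  the transfer shows that it is a subgroup.\<close>

lemma normal_complement_in_centralizer:
  assumes g: "g \<in> carrier G" and "ord g = q" "prime q"
    and normal: "generate G {g} \<lhd> G" and "\<not> q\<^sup>2 dvd order G"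
  obtains K where "K \<lhd> G" "K \<subseteq> centralizer g" "g \<notin> K"
    "\<And>c. c \<in> centralizer g \<Longrightarrow> \<not> q dvd ord c \<Longrightarrow> c \<in> K"
proof -
  define Q where "Q = generate G {g}"
  define C where "C = centralizer g"
  have "central_transfer G C Q"
  proof (intro central_transfer.intro central_transfer_axioms.intro is_group)
    show "subgroup C G" unfolding C_def using subgroup_centralizer[OF g] .
    show "subgroup Q G" unfolding Q_def using generate_is_subgroup g by simp
    show "Q \<subseteq> C" unfolding Q_def C_def using generate_subset_own_centralizer[OF g] .
    show "a \<otimes> b = b \<otimes> a" if "a \<in> Q" "b \<in> C" for a b
      using commutes_if_mem_generate_centralizer[OF g] that unfolding Q_def C_def by blast
  qed
  then interpret central_transfer G C Q .
  define n where "n = card cosets"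
  have card_Q: "card Q = q" unfolding Q_def using generate_pow_card[OF g] \<open>ord g = q\<close> by simp
  have "\<not> q dvd n" unfolding n_def by (rule not_dvd_card_cosets) fact+
  define K where "K = {c \<in> C. c [^] n = \<one>}"
  have "K \<lhd> G"
  proof (rule normal_invI)
    show "subgroup K G" unfolding K_def n_def
      using subgroup_pow_card_cosets_eq_one prime_imp_coprime[OF \<open>prime q\<close> \<open>\<not> q dvd n\<close>] card_Q
      by (simp add: n_def coprime_commute)
    show "s \<otimes> c \<otimes> inv s \<in> K" if s: "s \<in> carrier G" and c: "c \<in> K" for s c
    proof -
      have "c \<in> C" "c \<in> carrier G" "c [^] n = \<one>" using c C_carrier unfolding K_def by auto
      moreover have "s \<otimes> c \<otimes> inv s \<in> C"
        using normal_invE(2)[OF normal_centralizer[OF g normal]] s \<open>c \<in> C\<close> C_def by blast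
      ultimately show ?thesis using conjugate_pow[OF s] s unfolding K_def by simp
    qed
  qed
  moreover have "K \<subseteq> centralizer g" unfolding K_def C_def by auto
  moreover have "g \<notin> K"
    using \<open>\<not> q dvd n\<close> pow_eq_id[OF g] \<open>ord g = q\<close> unfolding K_def by simp
  moreover have "c \<in> K" if "c \<in> centralizer g" "\<not> q dvd ord c" for c
  proof -
    have "coprime (ord c) (card Q)"
      using prime_imp_coprime[OF \<open>prime q\<close> that(2)] card_Q by (simp add: coprime_commute)
    then show ?thesis using pow_card_cosets_eq_one that(1) unfolding K_def C_def n_def by simp
  qed
  ultimately show ?thesis using that by blast
qed

lemma involution_centralizes_or_inverts:
  assumes "finite (carrier G)" and s: "s \<in> carrier G" "s \<otimes> s = \<one>"
    and g: "g \<in> carrier G" "ord g = q" "prime q" and "s \<otimes> g \<otimes> s \<in> generate G {g}"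
  shows "s \<in> centralizer g \<or> s \<otimes> g \<otimes> s = inv g"
proof -
  have inv_s: "inv s = s" using inv_equality[OF s(2) s(1) s(1)] .
  obtain k where k: "s \<otimes> g \<otimes> s = g [^] (k::nat)"
    using assms(7) generate_pow_on_finite_carrier[OF assms(1) g(1)] by auto
  have "g [^] (k * k) = (s \<otimes> g \<otimes> inv s) [^] k"
    using k inv_s g(1) by (simp add: nat_pow_pow)
  also have "\<dots> = s \<otimes> (s \<otimes> g \<otimes> s) \<otimes> s" using conjugate_pow[OF s(1) g(1)] k inv_s by simp
  also have "\<dots> = g" using s g(1) by (simp add: m_assoc[symmetric]) (simp add: m_assoc)
  finally have kk: "g [^] (k * k) = g" .
  have "k \<noteq> 0"
  proof
    assume "k = 0"
    then have "g = \<one>" using kk by simp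
    then show False using g(2,3) prime_gt_1_nat by fastforce
  qed
  have "g [^] (k * k - 1) = \<one>" using pow_eq_div2[OF g(1), of "k * k" 1] kk g(1) by simp
  moreover have "k * k - 1 = (k - 1) * (k + 1)" using \<open>k \<noteq> 0\<close> by (cases k) simp_all
  ultimately have "q dvd (k - 1) * (k + 1)" using pow_eq_id[OF g(1)] g(2) by simp
  then consider "q dvd k - 1" | "q dvd k + 1" using prime_dvd_mult_iff[OF g(3)] by blast
  then show ?thesis
  proof cases
    case 1
    then have "g [^] (k - 1) = \<one>" using pow_eq_id[OF g(1)] g(2) by simp
    then have "s \<otimes> g \<otimes> s = g"
      using k g(1) \<open>k \<noteq> 0\<close> by (metis Suc_pred' l_one nat_pow_Suc neq0_conv)
    moreover have "s \<otimes> g = (s \<otimes> g \<otimes> s) \<otimes> s" using s g(1) by (simp add: m_assoc)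
    ultimately have "s \<otimes> g = g \<otimes> s" by simp
    then show ?thesis using s(1) unfolding centralizer_def by simp
  next
    case 2
    then have "g [^] k \<otimes> g = \<one>" using pow_eq_id[OF g(1), of "k + 1"] g by simp
    then have "inv g = g [^] k" using inv_equality g(1) by simp
    then show ?thesis using k by simp
  qed
qed

lemma involution_conjugate_swap:
  assumes "a \<in> carrier G" "a \<otimes> a = \<one>" "x \<in> carrier G"
  shows "a \<otimes> x = (a \<otimes> x \<otimes> a) \<otimes> a"
  using assms by (simp add: m_assoc)

lemma mult_inverting_involutions_in_centralizer:
  assumes a: "a \<in> carrier G" "a \<otimes> a = \<one>" "a \<otimes> g \<otimes> a = inv g"
    and b: "b \<in> carrier G" "b \<otimes> b = \<one>" "b \<otimes> g \<otimes> b = inv g" and g: "g \<in> carrier G"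
  shows "a \<otimes> b \<in> centralizer g"
proof -
  have ag: "a \<otimes> g = inv g \<otimes> a" using involution_conjugate_swap[OF a(1,2) g] a(3) by simp
  have bg: "b \<otimes> g = inv g \<otimes> b" using involution_conjugate_swap[OF b(1,2) g] b(3) by simp
  have "a \<otimes> inv g = g \<otimes> (inv g \<otimes> a) \<otimes> inv g" using a g by (simp add: m_assoc)
  also have "\<dots> = g \<otimes> a" using a g by (simp add: ag[symmetric] m_assoc)
  finally have ag': "a \<otimes> inv g = g \<otimes> a" .
  have "(a \<otimes> b) \<otimes> g = (a \<otimes> inv g) \<otimes> b" using bg a b g by (simp add: m_assoc)
  also have "\<dots> = g \<otimes> (a \<otimes> b)" using ag' a b g by (simp add: m_assoc)
  finally show ?thesis using a(1) b(1) unfolding centralizer_def by simp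
qed

lemma subgroup_set_mult_involution:
  assumes "K \<lhd> G" "s \<in> carrier G" "s \<otimes> s = \<one>"
  shows "subgroup (K <#> {\<one>, s}) G"
proof -
  have "subgroup {\<one>, s} G"
    using assms(2,3) inv_equality[OF assms(3) assms(2) assms(2)] by (auto intro!: subgroupI)
  then show ?thesis
    using second_isomorphism_grp.normal_set_mult_subgroup[of K G "{\<one>, s}"] assms(1)
    by (simp add: second_isomorphism_grp_def second_isomorphism_grp_axioms_def)
qed

lemma mem_set_mult_pair_iff:
  assumes "K \<subseteq> carrier G"
  shows "x \<in> K <#> {\<one>, s} \<longleftrightarrow> x \<in> K \<or> (\<exists>k \<in> K. x = k \<otimes> s)"
  using assms unfolding set_mult_def by (auto simp: subsetD)

lemma generator_in_normal_subgroup_of_centralizer: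
  assumes K: "K \<lhd> G" "K \<subseteq> centralizer g" and g: "g \<in> carrier G"
    and gen: "generate G A = carrier G" and A: "A \<subseteq> carrier G"
    and invol: "\<And>a. a \<in> A \<Longrightarrow> a \<otimes> a = \<one>"
    and inverting: "\<And>a. a \<in> A \<Longrightarrow> a \<notin> centralizer g \<Longrightarrow> a \<otimes> g \<otimes> a = inv g"
    and centralizing_in_K: "\<And>a. a \<in> A \<Longrightarrow> a \<in> centralizer g \<Longrightarrow> a \<in> K"
    and products_in_K: "\<And>a b. a \<in> A \<Longrightarrow> b \<in> A \<Longrightarrow> a \<otimes> b \<in> centralizer g \<Longrightarrow> a \<otimes> b \<in> K"
  shows "g \<in> K"
proof (cases "A \<subseteq> centralizer g")
  case True
  then have "generate G A \<subseteq> K"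
    using centralizing_in_K generate_subgroup_incl[OF _ normal_imp_subgroup[OF K(1)]] by blast
  then show ?thesis using gen g by blast
next
  case False
  then obtain s where s: "s \<in> A" "s \<notin> centralizer g" by blast
  have s_carrier: "s \<in> carrier G" using s A by blast
  have K_subset: "K \<subseteq> carrier G" using normal_imp_subgroup[OF K(1)] subgroup.subset by blast
  have "A \<subseteq> K <#> {\<one>, s}"
  proof
    fix a assume a: "a \<in> A"
    show "a \<in> K <#> {\<one>, s}"
    proof (cases "a \<in> centralizer g")
      case True
      then show ?thesis using centralizing_in_K[OF a] mem_set_mult_pair_iff[OF K_subset] by blast
    next
      case False
      have "a \<otimes> s \<in> centralizer g"
        using mult_inverting_involutions_in_centralizer inverting[OF a False] inverting[OF s] a s
          A invol g by blast
      then have "a \<otimes> s \<in> K" using products_in_K[OF a s(1)] by blast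
      moreover have "a = (a \<otimes> s) \<otimes> s"
        using a s_carrier A invol[OF s(1)] by (simp add: m_assoc subsetD)
      ultimately show ?thesis using mem_set_mult_pair_iff[OF K_subset] by blast
    qed
  qed
  then have "g \<in> K <#> {\<one>, s}"
    using generate_subgroup_incl subgroup_set_mult_involution[OF K(1) s_carrier invol[OF s(1)]] gen g
    by blast
  moreover have "g \<noteq> k \<otimes> s" if "k \<in> K" for k
  proof
    assume "g = k \<otimes> s"
    then have "s = inv k \<otimes> g" using that K_subset s_carrier by (simp add: subsetD m_assoc)
    moreover have "inv k \<otimes> g \<in> centralizer g"
    proof (rule subgroup.m_closed[OF subgroup_centralizer[OF g]])
      show "inv k \<in> centralizer g"
        using subgroup.m_inv_closed[OF subgroup_centralizer[OF g]] that K(2) by blast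
      show "g \<in> centralizer g" using g unfolding centralizer_def by simp
    qed
    ultimately show False using s(2) by simp
  qed
  ultimately show ?thesis using mem_set_mult_pair_iff[OF K_subset] by blast
qed

lemma prime_dvd_ord_mult_of_generating_involutions:
  assumes "finite (carrier G)" and gen: "generate G A = carrier G" and A: "A \<subseteq> carrier G"
    and invol: "\<And>a. a \<in> A \<Longrightarrow> a \<otimes> a = \<one>"
    and Q: "Q \<lhd> G" "card Q = q" and "prime q" "q \<noteq> 2" and "\<not> q\<^sup>2 dvd order G"
  shows "\<exists>a \<in> A. \<exists>b \<in> A. q dvd ord (a \<otimes> b)"
proof (rule ccontr)
  assume "\<not> ?thesis"
  obtain g where "g \<in> Q" "ord g = q" and Q_eq: "generate G {g} = Q"
    using prime_order_subgroup_cyclic[OF normal_imp_subgroup[OF Q(1)] Q(2) \<open>prime q\<close>] .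
  then have g: "g \<in> carrier G" using subgroup.mem_carrier[OF normal_imp_subgroup[OF Q(1)]] by blast
  obtain K where K: "K \<lhd> G" "K \<subseteq> centralizer g" "g \<notin> K"
    and coprime_in_K: "\<And>c. c \<in> centralizer g \<Longrightarrow> \<not> q dvd ord c \<Longrightarrow> c \<in> K"
    using normal_complement_in_centralizer[OF g \<open>ord g = q\<close> \<open>prime q\<close>
        Q(1)[folded Q_eq] \<open>\<not> q\<^sup>2 dvd order G\<close>] by blast
  have "\<not> q dvd 2"
    using \<open>q \<noteq> 2\<close> prime_ge_2_nat[OF \<open>prime q\<close>] by (auto dest: dvd_imp_le)
  have "g \<in> K"
  proof (rule generator_in_normal_subgroup_of_centralizer[OF K(1,2) g gen A invol])
    show "a \<otimes> g \<otimes> a = inv g" if a: "a \<in> A" "a \<notin> centralizer g" for a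
    proof -
      have "a \<in> carrier G" using a A by blast
      then have "inv a = a" using inv_equality[OF invol[OF a(1)]] by simp
      then have "a \<otimes> g \<otimes> a \<in> generate G {g}"
        using normal_invE(2)[OF Q(1) \<open>a \<in> carrier G\<close> \<open>g \<in> Q\<close>] Q_eq by simp
      then show ?thesis
        using involution_centralizes_or_inverts[OF \<open>finite (carrier G)\<close> \<open>a \<in> carrier G\<close>
            invol[OF a(1)] g \<open>ord g = q\<close> \<open>prime q\<close>] a(2) by blast
    qed
    show "a \<in> K" if "a \<in> A" "a \<in> centralizer g" for a
    proof (rule coprime_in_K[OF that(2)])
      have "a [^] (2::nat) = \<one>" using invol[OF that(1)] A that(1) by (auto simp: numeral_2_eq_2)
      then have "ord a dvd 2" using pow_eq_id A that(1) by blast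
      then show "\<not> q dvd ord a" using \<open>\<not> q dvd 2\<close> dvd_trans by blast
    qed
    show "a \<otimes> b \<in> K" if "a \<in> A" "b \<in> A" "a \<otimes> b \<in> centralizer g" for a b
      using coprime_in_K that \<open>\<not> (\<exists>a \<in> A. \<exists>b \<in> A. q dvd ord (a \<otimes> b))\<close> by blast
  qed
  then show False using K(3) by blast
qed

end

section \<open>Regular maps\<close>

lemma euler_char_equation:
  fixes G :: "('g, 'b) monoid_scheme" and r t l :: 'g
  defines "x \<equiv> group.ord G (r \<otimes>\<^bsub>G\<^esub> t)" and "y \<equiv> group.ord G (r \<otimes>\<^bsub>G\<^esub> l)"
  assumes chi: "euler_char G r t l = - real n" and order: "order G = n * m"
    and "0 < n" "0 < x" "0 < y"
  shows "int m * (int x * int y - 2 * int x - 2 * int y) = 4 * int x * int y"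
proof -
  have "- (real (n * m) * (real x * real y - 2 * real x - 2 * real y)) / (4 * real x * real y)
      = - real n"
    using chi order unfolding euler_char_def Let_def x_def y_def by simp
  then have "real n * (real m * (real x * real y - 2 * real x - 2 * real y))
      = real n * (4 * real x * real y)"
    using \<open>0 < x\<close> \<open>0 < y\<close> by (simp add: field_simps)
  then have "real m * (real x * real y - 2 * real x - 2 * real y) = 4 * real x * real y"
    using \<open>0 < n\<close> by simp
  then have "real_of_int (int m * (int x * int y - 2 * int x - 2 * int y))
      = real_of_int (4 * int x * int y)"
    by simp
  then show ?thesis by (simp only: of_int_eq_iff)
qed

lemma (in group) ord_mult_three_involutions_le:
  assumes "r \<in> carrier G" "t \<in> carrier G" "l \<in> carrier G"
    and "r \<otimes> r = \<one>" "t \<otimes> t = \<one>" "l \<otimes> l = \<one>" "t \<otimes> l = l \<otimes> t"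
    and "a \<in> {r, t, l}" "b \<in> {r, t, l}"
  shows "ord (a \<otimes> b) \<le> max 2 (max (ord (r \<otimes> t)) (ord (r \<otimes> l)))"
proof -
  have inv: "inv r = r" "inv t = t" "inv l = l"
    using inv_equality assms(1-6) by blast+
  have "t \<otimes> r = inv (r \<otimes> t)" "l \<otimes> r = inv (r \<otimes> l)"
    using assms(1-3) inv by (simp_all add: inv_mult_group)
  then have reversed: "ord (t \<otimes> r) = ord (r \<otimes> t)" "ord (l \<otimes> r) = ord (r \<otimes> l)"
    using assms(1-3) by simp_all
  have "(t \<otimes> l) [^] (2::nat) = t \<otimes> (l \<otimes> t) \<otimes> l"
    using assms(2,3) by (simp add: numeral_2_eq_2 m_assoc)
  also have "\<dots> = \<one>" using assms(2,3,5,6,7) by (simp add: m_assoc[symmetric]) (simp add: m_assoc)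
  finally have "ord (t \<otimes> l) dvd 2" using pow_eq_id assms(2,3) by blast
  then have tl: "ord (t \<otimes> l) \<le> 2" "ord (l \<otimes> t) \<le> 2"
    using assms(7) by (simp_all add: dvd_imp_le)
  show ?thesis
    using assms(8,9) assms(4-6) reversed tl by auto
qed

lemma regular_map_type_bounds:
  fixes G :: "('g, 'b) monoid_scheme" (structure)
  assumes map: "regular_map G r t l" and chi: "euler_char G r t l = - real n"
    and order: "order G = n * m" and "0 < n"
  shows "m \<le> 84" "group.ord G (r \<otimes> t) \<le> 3360" "group.ord G (r \<otimes> l) \<le> 3360"
proof -
  interpret group G using map unfolding regular_map_def by blast
  have "finite (carrier G)" "r \<in> carrier G" "t \<in> carrier G" "l \<in> carrier G"
    using map unfolding regular_map_def involution_def by auto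
  then have "0 < ord (r \<otimes> t)" "0 < ord (r \<otimes> l)" using ord_ge_1 by (simp_all add: Suc_le_eq)
  then show "m \<le> 84" "ord (r \<otimes> t) \<le> 3360" "ord (r \<otimes> l) \<le> 3360"
    using hurwitz_equation_bounds[of "int (ord (r \<otimes> t))" "int (ord (r \<otimes> l))" "int m"]
      euler_char_equation[OF chi order \<open>0 < n\<close>] by simp_all
qed

lemma regular_map_bounds:
  fixes G :: "('g, 'b) monoid_scheme" (structure)
  assumes map: "regular_map G r t l" and chi: "euler_char G r t l = - real (p * q)"
    and "p * q dvd order G" and "prime p" "prime q" "p < q"
  shows "q \<le> 14112" "group.ord G (r \<otimes> t) \<le> 3360" "group.ord G (r \<otimes> l) \<le> 3360"
proof -
  interpret group G using map unfolding regular_map_def by blast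
  have fin: "finite (carrier G)" and gen: "generate G {r, t, l} = carrier G" and "t \<otimes> l = l \<otimes> t"
    and carrier: "r \<in> carrier G" "t \<in> carrier G" "l \<in> carrier G"
    and invol: "r \<otimes> r = \<one>" "t \<otimes> t = \<one>" "l \<otimes> l = \<one>"
    using map unfolding regular_map_def involution_def by auto
  obtain m where order: "order G = p * q * m" using \<open>p * q dvd order G\<close> by blast
  have "0 < p * q" using prime_gt_0_nat \<open>prime p\<close> \<open>prime q\<close> by simp
  then have "m \<le> 84" and xy: "ord (r \<otimes> t) \<le> 3360" "ord (r \<otimes> l) \<le> 3360"
    using regular_map_type_bounds[OF map chi] order by simp_all
  then show "ord (r \<otimes> t) \<le> 3360" "ord (r \<otimes> l) \<le> 3360" by simp_all
  show "q \<le> 14112"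
  proof (rule ccontr)
    assume "\<not> q \<le> 14112"
    obtain Q where Q: "Q \<lhd> G" "card Q = q"
      using normal_subgroup_of_large_prime_order[OF fin \<open>prime p\<close> \<open>prime q\<close> \<open>p < q\<close> order
          \<open>m \<le> 84\<close>] \<open>\<not> q \<le> 14112\<close> by auto
    have "0 < m" using order fin order_gt_0_iff_finite by (cases m) auto
    then have "\<not> q\<^sup>2 dvd order G"
      using not_prime_square_dvd_mult_of_less[OF \<open>prime q\<close> prime_gt_0_nat[OF \<open>prime p\<close>]]
        \<open>p < q\<close> \<open>m \<le> 84\<close> \<open>\<not> q \<le> 14112\<close> order by simp
    moreover have "{r, t, l} \<subseteq> carrier G" and "\<And>a. a \<in> {r, t, l} \<Longrightarrow> a \<otimes> a = \<one>"
      using carrier invol by auto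
    moreover have "q \<noteq> 2" using \<open>\<not> q \<le> 14112\<close> by simp
    ultimately have "\<exists>a \<in> {r, t, l}. \<exists>b \<in> {r, t, l}. q dvd ord (a \<otimes> b)"
      using prime_dvd_ord_mult_of_generating_involutions[OF fin gen _ _ Q \<open>prime q\<close>] by simp
    then obtain a b where ab: "a \<in> {r, t, l}" "b \<in> {r, t, l}" "q dvd ord (a \<otimes> b)" by blast
    have "a \<otimes> b \<in> carrier G" using ab(1,2) carrier by auto
    then have "q \<le> ord (a \<otimes> b)" using ord_ge_1[OF fin] dvd_imp_le[OF ab(3)] by fastforce
    moreover have "ord (a \<otimes> b) \<le> 3360"
      using ord_mult_three_involutions_le[OF carrier invol \<open>t \<otimes> l = l \<otimes> t\<close> ab(1,2)] xy by simp
    ultimately show False using \<open>\<not> q \<le> 14112\<close> by simp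
  qed
qed

theorem theorem3p1:
  "finite {(T :: nat set, p :: nat, q :: nat).
      prime p \<and> prime q \<and> 5 \<le> p \<and> p < q \<and>
      (\<exists>(G :: 'g monoid) r t l. regular_map G r t l \<and> map_type G r t l = T \<and>
          euler_char G r t l = - real (p * q) \<and> p * q dvd order G)}"
proof -
  have bounded: "(T, p, q) \<in> Pow {..3360} \<times> {..14112} \<times> {..14112}"
    if "prime p" "prime q" "p < q" "regular_map G r t l" "map_type G r t l = T"
      "euler_char G r t l = - real (p * q)" "p * q dvd order G"
    for T p q and G :: "'g monoid" and r t l
    using regular_map_bounds[OF that(4,6,7,1-3)] that(3,5) unfolding map_type_def by auto
  show ?thesis
    by (rule finite_subset[of _ "Pow {..3360} \<times> {..14112} \<times> {..14112}"])
      (use bounded in blast, simp)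
qed

end
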